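(* Let $\varepsilon>0$ be a constant and let $c_0>0$ be a sufficiently large constant (depending on $\varepsilon$). If $c_0/n\leq p\leq\ln(n)^7/n$, then with probability at least $9/10$ the random graph $G(n,p)$ has at most $1/p$ vertices of degree greater than $(1+\varepsilon)np$.
   Context: $G(n,p)$ is the random graph on $\{1,\dots,n\}$ with each possible edge present independently with probability $p$. *)

theory Defs
  imports "HOL-Probability.Probability"
begin

definition gnp_pairs :: "nat \<Rightarrow> (nat \<times> nat) set" where
  "gnp_pairs n = {(u, v). 1 \<le> u \<and> u < v \<and> v \<le> n}"

text \<open>The random graph G(n,p): each potential edge present independently with probability p.
  A graph is represented by its edge indicator on ordered pairs (u,v) with u < v.\<close>
definition gnp :: "nat \<Rightarrow> real \<Rightarrow> ((nat \<times> nat) \<Rightarrow> bool) pmf" where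
  "gnp n p = Pi_pmf (gnp_pairs n) False (\<lambda>_. bernoulli_pmf p)"

definition adj :: "((nat \<times> nat) \<Rightarrow> bool) \<Rightarrow> nat \<Rightarrow> nat \<Rightarrow> bool" where
  "adj G u v = (u \<noteq> v \<and> G (min u v, max u v))"

definition degree :: "nat \<Rightarrow> ((nat \<times> nat) \<Rightarrow> bool) \<Rightarrow> nat \<Rightarrow> nat" where
  "degree n G v = card {u \<in> {1..n}. adj G u v}"

end

theory Submission
  imports Defs
begin

text \<open>The degree of a fixed vertex of G(n,p) is Binomial(n-1, p), so by the multiplicative
  Chernoff bound it exceeds (1+\<epsilon>)np with probability at most exp(-d np), where
  d = (1+\<epsilon>) ln(1+\<epsilon>) - \<epsilon> > 0. The expected number of such vertices is therefore at most
  n exp(-d np), and Markov's inequality bounds the probability that there are more than 1/p of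
  them by np exp(-d np) \<le> 2/(d^2 np), which is at most 1/10 once np \<ge> 20/d^2.\<close>

lemma binomial_pmf_tail_exp_bound:
  fixes m :: nat and p t a :: real
  assumes "0 \<le> p" "p \<le> 1" "t \<ge> 0"
  shows "measure_pmf.prob (binomial_pmf m p) {k. real k > a}
           \<le> exp (- t * a + real m * p * (exp t - 1))"
proof -
  have indicator_le_exp: "indicator {k. real k > a} k \<le> exp (t * (real k - a))" for k :: nat
  proof (cases "real k > a")
    case True
    then have "0 \<le> t * (real k - a)" using assms by simp
    then show ?thesis using True by simp
  qed simp
  have "measure_pmf.prob (binomial_pmf m p) {k. real k > a}
      = (\<Sum>k\<le>m. indicator {k. real k > a} k * pmf (binomial_pmf m p) k)"
    using assms by (subst integral_measure_pmf_real[symmetric])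
      (auto simp: set_pmf_binomial_eq split: if_splits)
  also have "\<dots> \<le> (\<Sum>k\<le>m. exp (t * (real k - a)) * pmf (binomial_pmf m p) k)"
    by (intro sum_mono mult_right_mono indicator_le_exp) simp
  also have "\<dots> = exp (- t * a) * (\<Sum>k\<le>m. real (m choose k) * (p * exp t) ^ k * (1 - p) ^ (m - k))"
    using assms by (simp add: sum_distrib_left pmf_binomial exp_diff exp_of_nat_mult[symmetric]
        algebra_simps power_mult_distrib exp_minus field_simps)
  also have "(\<Sum>k\<le>m. real (m choose k) * (p * exp t) ^ k * (1 - p) ^ (m - k)) = (p * exp t + (1 - p)) ^ m"
    by (subst binomial_ring) (simp add: atMost_atLeast0 mult_ac)
  also have "\<dots> = (1 + p * (exp t - 1)) ^ m"
    by (simp add: algebra_simps)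
  also have "\<dots> \<le> exp (p * (exp t - 1)) ^ m"
    using assms by (intro power_mono) auto
  also have "\<dots> = exp (real m * p * (exp t - 1))"
    by (simp add: exp_of_nat_mult[symmetric] mult_ac)
  finally show ?thesis by (simp add: exp_add[symmetric])
qed

lemma binomial_pmf_tail_Chernoff:
  fixes m :: nat and p \<epsilon> \<mu> :: real
  assumes "0 \<le> p" "p \<le> 1" "\<epsilon> > 0" "real m * p \<le> \<mu>"
  shows "measure_pmf.prob (binomial_pmf m p) {k. real k > (1 + \<epsilon>) * \<mu>}
           \<le> exp (- ((1 + \<epsilon>) * ln (1 + \<epsilon>) - \<epsilon>) * \<mu>)"
proof -
  have "measure_pmf.prob (binomial_pmf m p) {k. real k > (1 + \<epsilon>) * \<mu>}
      \<le> exp (- ln (1 + \<epsilon>) * ((1 + \<epsilon>) * \<mu>) + real m * p * \<epsilon>)"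
    using binomial_pmf_tail_exp_bound[of p "ln (1 + \<epsilon>)" m] assms by simp
  also have "\<dots> \<le> exp (- ((1 + \<epsilon>) * ln (1 + \<epsilon>) - \<epsilon>) * \<mu>)"
    using mult_right_mono[OF assms(4), of \<epsilon>] assms(3) by (simp add: algebra_simps)
  finally show ?thesis .
qed

lemma Chernoff_rate_pos:
  fixes \<epsilon> :: real
  assumes "\<epsilon> > 0"
  shows "(1 + \<epsilon>) * ln (1 + \<epsilon>) - \<epsilon> > 0"
  using ln_add1_gt[OF assms] assms by (simp add: field_simps add.commute)

lemma finite_gnp_pairs: "finite (gnp_pairs n)"
  by (rule finite_subset[of _ "{1..n} \<times> {1..n}"]) (auto simp: gnp_pairs_def)

definition incident_pairs :: "nat \<Rightarrow> nat \<Rightarrow> (nat \<times> nat) set" where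
  "incident_pairs n v = {e \<in> gnp_pairs n. fst e = v \<or> snd e = v}"

lemma bij_betw_incident_pairs:
  assumes "v \<in> {1..n}"
  shows "bij_betw (\<lambda>u. (min u v, max u v)) ({1..n} - {v}) (incident_pairs n v)"
proof (rule bij_betw_imageI)
  show "inj_on (\<lambda>u. (min u v, max u v)) ({1..n} - {v})"
    by (auto simp: inj_on_def min_def max_def split: if_splits)
  show "(\<lambda>u. (min u v, max u v)) ` ({1..n} - {v}) = incident_pairs n v"
  proof
    show "(\<lambda>u. (min u v, max u v)) ` ({1..n} - {v}) \<subseteq> incident_pairs n v"
      using assms by (auto simp: incident_pairs_def gnp_pairs_def min_def max_def)
  next
    show "incident_pairs n v \<subseteq> (\<lambda>u. (min u v, max u v)) ` ({1..n} - {v})"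
    proof
      fix e assume "e \<in> incident_pairs n v"
      then obtain x y where e: "e = (x, y)" "1 \<le> x" "x < y" "y \<le> n" "x = v \<or> y = v"
        by (auto simp: incident_pairs_def gnp_pairs_def)
      then show "e \<in> (\<lambda>u. (min u v, max u v)) ` ({1..n} - {v})"
        by (intro image_eqI[of _ _ "if x = v then y else x"]) auto
    qed
  qed
qed

lemma card_incident_pairs: "v \<in> {1..n} \<Longrightarrow> card (incident_pairs n v) = n - 1"
  using bij_betw_same_card[OF bij_betw_incident_pairs] by simp

lemma degree_eq_card_incident_edges:
  assumes "v \<in> {1..n}"
  shows "degree n G v = card {e \<in> incident_pairs n v. G e}"
proof -
  have "{e \<in> incident_pairs n v. G e} = (\<lambda>u. (min u v, max u v)) ` {u \<in> {1..n}. adj G u v}"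
    unfolding bij_betw_imp_surj_on[OF bij_betw_incident_pairs[OF assms], symmetric]
    by (auto simp: adj_def)
  moreover have "inj_on (\<lambda>u. (min u v, max u v)) {u \<in> {1..n}. adj G u v}"
    using bij_betw_imp_inj_on[OF bij_betw_incident_pairs[OF assms]]
    by (rule inj_on_subset) (auto simp: adj_def)
  ultimately show ?thesis
    by (simp add: degree_def card_image)
qed

lemma degree_gnp_binomial:
  assumes "v \<in> {1..n}" "0 \<le> p" "p \<le> 1"
  shows "map_pmf (\<lambda>G. degree n G v) (gnp n p) = binomial_pmf (n - 1) p"
proof -
  let ?A = "incident_pairs n v"
  have A_subset: "?A \<subseteq> gnp_pairs n"
    by (auto simp: incident_pairs_def)
  have "map_pmf (\<lambda>G. degree n G v) (gnp n p)
      = map_pmf (\<lambda>G. card {e \<in> ?A. G e}) (map_pmf (\<lambda>G e. if e \<in> ?A then G e else False) (gnp n p))"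
    by (simp add: map_pmf_comp degree_eq_card_incident_edges[OF assms(1)])
      (intro map_pmf_cong refl arg_cong[where f = card], auto)
  also have "map_pmf (\<lambda>G e. if e \<in> ?A then G e else False) (gnp n p) = Pi_pmf ?A False (\<lambda>_. bernoulli_pmf p)"
    unfolding gnp_def using finite_gnp_pairs A_subset by (rule Pi_pmf_subset[symmetric])
  also have "map_pmf (\<lambda>G. card {e \<in> ?A. G e}) \<dots> = binomial_pmf (n - 1) p"
    using finite_subset[OF A_subset finite_gnp_pairs] card_incident_pairs[OF assms(1)] assms(2,3)
    by (intro binomial_pmf_altdef'[symmetric]) auto
  finally show ?thesis .
qed

lemma prob_card_occurring_events_le:
  fixes M :: "'a pmf" and E :: "'b \<Rightarrow> 'a set"
  assumes "finite V" "s > 0" "\<And>v. v \<in> V \<Longrightarrow> measure_pmf.prob M (E v) \<le> q"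
  shows "measure_pmf.prob M {x. real (card {v \<in> V. x \<in> E v}) \<le> s} \<ge> 1 - real (card V) * q / s"
proof -
  define X where "X x = real (card {v \<in> V. x \<in> E v})" for x
  have X_eq_sum: "X x = (\<Sum>v\<in>V. indicator (E v) x)" for x
    using assms(1) by (simp add: X_def indicator_def sum.If_cases Int_def)
  have X_nonneg: "X x \<ge> 0" for x
    by (simp add: X_def)
  have integrable_indicator: "integrable M (indicator (E v) :: 'a \<Rightarrow> real)" for v
    by (simp add: less_top[symmetric])
  have integrable_X: "integrable M X"
    unfolding X_eq_sum using integrable_indicator by (rule Bochner_Integration.integrable_sum)
  have "measure_pmf.expectation M X = (\<Sum>v\<in>V. measure_pmf.prob M (E v))"
    unfolding X_eq_sum using integrable_indicator by (subst Bochner_Integration.integral_sum) auto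
  also have "\<dots> \<le> real (card V) * q"
    using sum_mono[of V _ "\<lambda>_. q", OF assms(3)] by simp
  finally have expectation_X: "measure_pmf.expectation M X \<le> real (card V) * q" .
  have "measure_pmf.prob M {x. X x > s} \<le> measure_pmf.prob M {x \<in> space M. X x \<ge> s}"
    by (intro measure_pmf.finite_measure_mono) auto
  also have "\<dots> \<le> measure_pmf.expectation M X / s"
    using assms(2) integrable_X X_nonneg
    by (intro integral_Markov_inequality_measure[where A = UNIV]) auto
  also have "\<dots> \<le> real (card V) * q / s"
    using expectation_X assms(2) by (intro divide_right_mono) auto
  finally have "measure_pmf.prob M {x. X x > s} \<le> real (card V) * q / s" .
  moreover have "measure_pmf.prob M {x. X x \<le> s} = 1 - measure_pmf.prob M {x. X x > s}"
  proof -
    have "{x. X x \<le> s} = space M - {x. X x > s}"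
      by auto
    then show ?thesis
      by (metis measure_pmf.prob_compl sets_measure_pmf UNIV_I)
  qed
  ultimately have "measure_pmf.prob M {x. X x \<le> s} \<ge> 1 - real (card V) * q / s"
    by linarith
  then show ?thesis
    by (simp add: X_def)
qed

lemma mult_exp_neg_le:
  fixes d x :: real
  assumes "d > 0" "x > 0"
  shows "x * exp (- d * x) \<le> 2 / (d\<^sup>2 * x)"
proof -
  have dx_pos: "d * x > 0"
    using assms by simp
  have "(d * x)\<^sup>2 / 2 \<le> exp (d * x)"
    using exp_lower_Taylor_quadratic[of "d * x"] dx_pos by linarith
  moreover have "(d * x)\<^sup>2 / 2 > 0"
    using dx_pos by (simp add: power2_eq_square)
  ultimately have "x / exp (d * x) \<le> x / ((d * x)\<^sup>2 / 2)"
    using assms(2) by (intro divide_left_mono mult_pos_pos) auto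
  also have "\<dots> = 2 / (d\<^sup>2 * x)"
    using assms by (simp add: field_simps power2_eq_square)
  finally show ?thesis
    by (simp add: exp_minus divide_inverse)
qed

lemma prob_degree_gnp_gt:
  fixes \<epsilon> p :: real
  assumes "v \<in> {1..n}" "0 \<le> p" "p \<le> 1" "\<epsilon> > 0"
  shows "measure_pmf.prob (gnp n p) {G. real (degree n G v) > (1 + \<epsilon>) * real n * p}
           \<le> exp (- ((1 + \<epsilon>) * ln (1 + \<epsilon>) - \<epsilon>) * (real n * p))"
proof -
  have "measure_pmf.prob (gnp n p) {G. real (degree n G v) > (1 + \<epsilon>) * real n * p}
      = measure_pmf.prob (map_pmf (\<lambda>G. degree n G v) (gnp n p)) {k. real k > (1 + \<epsilon>) * (real n * p)}"
    by (simp add: mult.assoc)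
  also have "\<dots> = measure_pmf.prob (binomial_pmf (n - 1) p) {k. real k > (1 + \<epsilon>) * (real n * p)}"
    using assms by (simp add: degree_gnp_binomial)
  also have "\<dots> \<le> exp (- ((1 + \<epsilon>) * ln (1 + \<epsilon>) - \<epsilon>) * (real n * p))"
    using assms by (intro binomial_pmf_tail_Chernoff) (auto intro: mult_right_mono)
  finally show ?thesis .
qed

lemma prob_card_high_degree_vertices_le:
  fixes \<epsilon> p :: real
  assumes "0 < p" "p \<le> 1" "\<epsilon> > 0"
  shows "measure_pmf.prob (gnp n p)
           {G. real (card {v \<in> {1..n}. real (degree n G v) > (1 + \<epsilon>) * real n * p}) \<le> 1 / p}
         \<ge> 1 - real n * p * exp (- ((1 + \<epsilon>) * ln (1 + \<epsilon>) - \<epsilon>) * (real n * p))"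
  using prob_card_occurring_events_le[where V = "{1..n}" and s = "1 / p" and M = "gnp n p"
      and E = "\<lambda>v. {G. real (degree n G v) > (1 + \<epsilon>) * real n * p}"
      and q = "exp (- ((1 + \<epsilon>) * ln (1 + \<epsilon>) - \<epsilon>) * (real n * p))"]
    prob_degree_gnp_gt[of _ n p \<epsilon>] assms
  by (simp add: mult_ac)

theorem lemma11:
  fixes \<epsilon> :: real
  assumes "\<epsilon> > 0"
  shows "\<exists>c0 > 0. \<forall>(n::nat) (p::real).
           c0 / real n \<le> p \<and> p \<le> ln (real n) ^ 7 / real n \<and> p \<le> 1 \<longrightarrow>
           measure_pmf.prob (gnp n p)
             {G. real (card {v \<in> {1..n}. real (degree n G v) > (1 + \<epsilon>) * real n * p}) \<le> 1 / p}
           \<ge> 9 / 10"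
proof -
  define d where "d = (1 + \<epsilon>) * ln (1 + \<epsilon>) - \<epsilon>"
  have d_pos: "d > 0"
    unfolding d_def using assms by (rule Chernoff_rate_pos)
  have c0_pos: "20 / d\<^sup>2 > 0"
    using d_pos by simp
  have "measure_pmf.prob (gnp n p)
          {G. real (card {v \<in> {1..n}. real (degree n G v) > (1 + \<epsilon>) * real n * p}) \<le> 1 / p}
        \<ge> 9 / 10" if "20 / d\<^sup>2 / real n \<le> p" "p \<le> 1" "n > 0" for n p
  proof -
    have np_large: "real n * p \<ge> 20 / d\<^sup>2"
      using that(1,3) by (subst (asm) pos_divide_le_eq) (simp_all add: mult.commute)
    then have "real n * p > 0"
      using c0_pos by linarith
    then have p_pos: "p > 0"
      by (simp add: zero_less_mult_iff)
    have "real n * p * exp (- d * (real n * p)) \<le> 2 / (d\<^sup>2 * (real n * p))"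
      using mult_exp_neg_le[of d "real n * p"] d_pos \<open>real n * p > 0\<close> by simp
    also have "\<dots> \<le> 1 / 10"
      using np_large d_pos by (simp add: field_simps)
    finally show ?thesis
      using prob_card_high_degree_vertices_le[of p \<epsilon> n] p_pos that(2) assms
      unfolding d_def by linarith
  qed
  \<comment> \<open>For n = 0 there are no vertices, so the event is certain.\<close>
  then show ?thesis
    using c0_pos by (intro exI[of _ "20 / d\<^sup>2"]) force
qed

end
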